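(* Let $Q\subset L^2(\mathbb{R})$ be bounded and $L^2$-equicontinuous, and let $\sigma>0$. Then \[ \lim_{\kappa\to\infty}\ \sup_{q\in Q}\ \|q\|_{E^\sigma_{\sigma,\kappa}}=0. \]
   Context: For $\sigma,s\in\mathbb{R}$ and $|\kappa|\ge1$, $\|q\|_{E^\sigma_{s,\kappa}}^2=\int\frac{|\kappa|^{2(s-\sigma)}|\xi|^{2\sigma}}{(4\kappa^2+\xi^2)^s}|\hat q(\xi)|^2\,d\xi$. $Q$ is $L^2$-equicontinuous if for every $\varepsilon>0$ there is $\eta>0$ with $\sup_{q\in Q}\sup_{|y|<\eta}\|q(\cdot+y)-q\|_{L^2}<\varepsilon$. *)

theory Defs
  imports "HOL-Analysis.Analysis"
begin

definition L2_space :: "(real \<Rightarrow> complex) set" where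
  "L2_space = {q. q \<in> borel_measurable lborel \<and> integrable lborel (\<lambda>x. (norm (q x))\<^sup>2)}"

definition L2_norm :: "(real \<Rightarrow> complex) \<Rightarrow> real" where
  "L2_norm q = sqrt (LINT x|lborel. (norm (q x))\<^sup>2)"

definition fourier :: "(real \<Rightarrow> complex) \<Rightarrow> real \<Rightarrow> complex" where
  "fourier f \<xi> = complex_of_real (1 / sqrt (2 * pi)) *
      (LINT x|lborel. exp (- \<i> * complex_of_real (x * \<xi>)) * f x)"

text \<open>Truncation to [-R,R]; for q in L^2 its Fourier transform converges in L^2 to the
  Plancherel Fourier transform of q.\<close>

definition trunc :: "real \<Rightarrow> (real \<Rightarrow> complex) \<Rightarrow> real \<Rightarrow> complex" where
  "trunc R q x = (if x \<in> {-R..R} then q x else 0)"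

definition E_weight :: "real \<Rightarrow> real \<Rightarrow> real \<Rightarrow> real \<Rightarrow> real" where
  "E_weight \<sigma> s \<kappa> \<xi> = \<bar>\<kappa>\<bar> powr (2 * (s - \<sigma>)) * \<bar>\<xi>\<bar> powr (2 * \<sigma>) / (4 * \<kappa>\<^sup>2 + \<xi>\<^sup>2) powr s"

text \<open>Squared E^sigma_{s,kappa} norm: integral of the weight against |hat q|^2, where hat q is the
  L^2 Fourier transform, realised as the limit over truncations.\<close>

definition E_norm_sq :: "real \<Rightarrow> real \<Rightarrow> real \<Rightarrow> (real \<Rightarrow> complex) \<Rightarrow> real" where
  "E_norm_sq \<sigma> s \<kappa> q =
     Lim at_top (\<lambda>R::real. LINT \<xi>|lborel. E_weight \<sigma> s \<kappa> \<xi> * (norm (fourier (trunc R q) \<xi>))\<^sup>2)"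

definition E_norm :: "real \<Rightarrow> real \<Rightarrow> real \<Rightarrow> (real \<Rightarrow> complex) \<Rightarrow> real" where
  "E_norm \<sigma> s \<kappa> q = sqrt (E_norm_sq \<sigma> s \<kappa> q)"

definition L2_equicontinuous :: "(real \<Rightarrow> complex) set \<Rightarrow> bool" where
  "L2_equicontinuous Q \<longleftrightarrow>
     (\<forall>\<epsilon>>0. \<exists>\<eta>>0. \<forall>q\<in>Q. \<forall>y. \<bar>y\<bar> < \<eta> \<longrightarrow> L2_norm (\<lambda>x. q (x + y) - q x) < \<epsilon>)"

end

(* Write w = E_weight sigma sigma kappa, so that 0 <= w <= 1.  Split frequency space at |xi| = 2/eta:
   on the low frequencies w <= (eta kappa)^(-2 sigma), on the high ones w <= 1.  For |xi| >= 2/eta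
   the average of |exp (i y xi) - 1|^2 over y in [0, eta] is at least 1, so by Plancherel the high
   frequency part of |hat q|^2 is bounded by sup over 0 <= y <= eta of ||q(. + y) - q||^2, which is
   uniformly small over an L^2-equicontinuous family.  Hence
     ||q||^2_E <= (eta kappa)^(-2 sigma) ||q||^2 + 3 sup ||q(. + y) - q||^2
   (the factor 3 pays for the truncations below), and kappa -> infinity finishes the proof.

   Since hat q is only defined through truncations q_R = q on [-R, R], this needs Plancherel's
   inequality for integrable functions and the existence of the limit over R.  Plancherel follows
   from the Gaussian-damped identity
     int exp (- xi^2 / (2 s^2)) |hat f xi|^2 = int int f x cnj (f y) g_s (x - y) dy dx
   (g_s the Fourier transform of the damping factor), Schur's test and Fatou's lemma as s -> infinity;
   the truncated energies are Cauchy as R -> infinity because ||q_R - q_R'||^2 is bounded by a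
   tail of ||q||^2. *)

theory Submission
  imports Defs "HOL-Probability.Characteristic_Functions"
begin

lemma borel_measurable_cnj [measurable]:
  "f \<in> borel_measurable M \<Longrightarrow> (\<lambda>x. cnj (f x)) \<in> borel_measurable M"
  using borel_measurable_continuous_on[OF continuous_on_cnj[OF continuous_on_id]] .

lemma norm_integral_le_nn_integral:
  fixes f :: "'a \<Rightarrow> 'b::{banach, second_countable_topology}"
  shows "ennreal (norm (integral\<^sup>L M f)) \<le> (\<integral>\<^sup>+x. norm (f x) \<partial>M)"
  by (cases "integrable M f") (simp_all add: integral_norm_bound_ennreal not_integrable_integral_eq)

lemma integrable_unimodular_mult:
  fixes f g :: "'a \<Rightarrow> complex"
  assumes "integrable M f" "g \<in> borel_measurable M" "\<And>x. norm (g x) = 1"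
  shows "integrable M (\<lambda>x. g x * f x)"
  using assms by (intro Bochner_Integration.integrable_bound[OF assms(1)]) (auto simp: norm_mult)

lemma integrable_lborel_shift:
  fixes f :: "real \<Rightarrow> 'a::{banach, second_countable_topology}"
  shows "integrable lborel f \<Longrightarrow> integrable lborel (\<lambda>x. f (x + y))"
  using lborel_integrable_real_affine[of f 1 y] by (simp add: add.commute)

lemma nn_integral_lborel_shift:
  fixes f :: "real \<Rightarrow> ennreal"
  assumes "f \<in> borel_measurable borel"
  shows "(\<integral>\<^sup>+x. f (x + y) \<partial>lborel) = (\<integral>\<^sup>+x. f x \<partial>lborel)"
  using nn_integral_real_affine[OF assms, of 1 y] by (simp add: add.commute)

lemma nn_integral_lborel_reflect_shift:
  fixes f :: "real \<Rightarrow> ennreal"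
  assumes "f \<in> borel_measurable borel"
  shows "(\<integral>\<^sup>+y. f (x - y) \<partial>lborel) = (\<integral>\<^sup>+t. f t \<partial>lborel)"
  using nn_integral_real_affine[OF assms, of "-1" x] by simp

lemma nn_integral_kernel_translates:
  fixes g k :: "real \<Rightarrow> ennreal"
  assumes [measurable]: "g \<in> borel_measurable borel" "k \<in> borel_measurable borel"
  shows "(\<integral>\<^sup>+x. \<integral>\<^sup>+y. g x * k (x - y) \<partial>lborel \<partial>lborel) = (\<integral>\<^sup>+t. k t \<partial>lborel) * (\<integral>\<^sup>+x. g x \<partial>lborel)"
    and "(\<integral>\<^sup>+x. \<integral>\<^sup>+y. g y * k (x - y) \<partial>lborel \<partial>lborel) = (\<integral>\<^sup>+t. k t \<partial>lborel) * (\<integral>\<^sup>+x. g x \<partial>lborel)"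
proof -
  have *: "(\<integral>\<^sup>+x. g x * (\<integral>\<^sup>+t. k t \<partial>lborel) \<partial>lborel) = (\<integral>\<^sup>+t. k t \<partial>lborel) * (\<integral>\<^sup>+x. g x \<partial>lborel)"
    by (simp add: nn_integral_multc mult.commute)
  then show "(\<integral>\<^sup>+x. \<integral>\<^sup>+y. g x * k (x - y) \<partial>lborel \<partial>lborel) = (\<integral>\<^sup>+t. k t \<partial>lborel) * (\<integral>\<^sup>+x. g x \<partial>lborel)"
    by (simp add: nn_integral_cmult nn_integral_lborel_reflect_shift)
  have "(\<integral>\<^sup>+x. \<integral>\<^sup>+y. g y * k (x - y) \<partial>lborel \<partial>lborel) = (\<integral>\<^sup>+y. \<integral>\<^sup>+x. g y * k (x - y) \<partial>lborel \<partial>lborel)"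
    by (rule lborel_pair.Fubini') measurable
  also have "\<dots> = (\<integral>\<^sup>+y. g y * (\<integral>\<^sup>+t. k t \<partial>lborel) \<partial>lborel)"
  proof -
    have "(\<integral>\<^sup>+x. k (x - y) \<partial>lborel) = (\<integral>\<^sup>+t. k t \<partial>lborel)" for y
      using nn_integral_lborel_shift[of k "- y"] by simp
    then show ?thesis
      by (simp add: nn_integral_cmult)
  qed
  finally show "(\<integral>\<^sup>+x. \<integral>\<^sup>+y. g y * k (x - y) \<partial>lborel \<partial>lborel) = (\<integral>\<^sup>+t. k t \<partial>lborel) * (\<integral>\<^sup>+x. g x \<partial>lborel)"
    unfolding * .
qed

lemma integrable_and_integral_le_of_nn_integral_le:
  fixes g :: "'a \<Rightarrow> real"
  assumes [measurable]: "g \<in> borel_measurable M" and g: "\<And>x. 0 \<le> g x" and c: "0 \<le> c"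
    and le: "(\<integral>\<^sup>+x. ennreal (g x) \<partial>M) \<le> ennreal c"
  shows "integrable M g" and "integral\<^sup>L M g \<le> c"
proof -
  show int: "integrable M g"
    using le g by (intro integrableI_nonneg) (auto simp: le_less_trans)
  have "ennreal (integral\<^sup>L M g) \<le> ennreal c"
    using le g by (subst nn_integral_eq_integral[OF int, symmetric]) auto
  then show "integral\<^sup>L M g \<le> c"
    using c by (simp add: ennreal_le_iff)
qed

lemma nn_integral_sq_norm_add3_le:
  fixes u v z :: "'a \<Rightarrow> complex"
  assumes [measurable]: "u \<in> borel_measurable M" "v \<in> borel_measurable M" "z \<in> borel_measurable M"
  shows "(\<integral>\<^sup>+x. ennreal ((norm (u x + v x + z x))\<^sup>2) \<partial>M)
    \<le> 3 * ((\<integral>\<^sup>+x. ennreal ((norm (u x))\<^sup>2) \<partial>M) + (\<integral>\<^sup>+x. ennreal ((norm (v x))\<^sup>2) \<partial>M)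
      + (\<integral>\<^sup>+x. ennreal ((norm (z x))\<^sup>2) \<partial>M))"
proof -
  have "ennreal ((norm (u x + v x + z x))\<^sup>2)
      \<le> 3 * (ennreal ((norm (u x))\<^sup>2) + ennreal ((norm (v x))\<^sup>2) + ennreal ((norm (z x))\<^sup>2))" for x
  proof -
    have "(norm (u x + v x + z x))\<^sup>2 \<le> (norm (u x) + norm (v x) + norm (z x))\<^sup>2"
      by (intro power_mono order_trans[OF norm_triangle_ineq add_right_mono[OF norm_triangle_ineq]]) simp
    also have "\<dots> \<le> 3 * ((norm (u x))\<^sup>2 + (norm (v x))\<^sup>2 + (norm (z x))\<^sup>2)"
      using zero_le_power2[of "norm (u x) - norm (v x)"] zero_le_power2[of "norm (v x) - norm (z x)"]
        zero_le_power2[of "norm (u x) - norm (z x)"]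
      by (simp add: power2_eq_square algebra_simps)
    finally have "ennreal ((norm (u x + v x + z x))\<^sup>2)
        \<le> ennreal (3 * ((norm (u x))\<^sup>2 + (norm (v x))\<^sup>2 + (norm (z x))\<^sup>2))"
      by (rule ennreal_leI)
    then show ?thesis
      by (simp add: ennreal_mult')
  qed
  then have "(\<integral>\<^sup>+x. ennreal ((norm (u x + v x + z x))\<^sup>2) \<partial>M)
      \<le> (\<integral>\<^sup>+x. 3 * (ennreal ((norm (u x))\<^sup>2) + ennreal ((norm (v x))\<^sup>2) + ennreal ((norm (z x))\<^sup>2)) \<partial>M)"
    by (rule nn_integral_mono)
  also have "\<dots> = 3 * ((\<integral>\<^sup>+x. ennreal ((norm (u x))\<^sup>2) \<partial>M) + (\<integral>\<^sup>+x. ennreal ((norm (v x))\<^sup>2) \<partial>M)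
      + (\<integral>\<^sup>+x. ennreal ((norm (z x))\<^sup>2) \<partial>M))"
    by (simp add: nn_integral_cmult nn_integral_add)
  finally show ?thesis .
qed

lemma abs_weighted_sq_norm_diff_le:
  fixes a b :: "'a::real_normed_vector"
  assumes w: "0 \<le> w" "w \<le> 1" and t: "t > 0"
  shows "\<bar>w * (norm a)\<^sup>2 - w * (norm b)\<^sup>2\<bar> \<le> (norm (a - b))\<^sup>2 / (2 * t) + t * ((norm a)\<^sup>2 + (norm b)\<^sup>2)"
proof -
  have "w * (norm a)\<^sup>2 - w * (norm b)\<^sup>2 = w * ((norm a - norm b) * (norm a + norm b))"
    by (simp add: power2_eq_square algebra_simps)
  then have "\<bar>w * (norm a)\<^sup>2 - w * (norm b)\<^sup>2\<bar> = w * (\<bar>norm a - norm b\<bar> * (norm a + norm b))"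
    using w by (simp add: abs_mult)
  also have "\<dots> \<le> \<bar>norm a - norm b\<bar> * (norm a + norm b)"
    using w by (intro mult_left_le_one_le) auto
  also have "\<dots> \<le> norm (a - b) * (norm a + norm b)"
    by (intro mult_right_mono norm_triangle_ineq3) auto
  also have "\<dots> \<le> (norm (a - b))\<^sup>2 / (2 * t) + t * (norm a + norm b)\<^sup>2 / 2"
    using t zero_le_power2[of "norm (a - b) - t * (norm a + norm b)"]
    by (simp add: power2_eq_square field_simps)
  also have "\<dots> \<le> (norm (a - b))\<^sup>2 / (2 * t) + t * ((norm a)\<^sup>2 + (norm b)\<^sup>2)"
  proof -
    have "(norm a + norm b)\<^sup>2 \<le> 2 * ((norm a)\<^sup>2 + (norm b)\<^sup>2)"
      using zero_le_power2[of "norm a - norm b"] by (simp add: power2_eq_square algebra_simps)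
    then have "t * (norm a + norm b)\<^sup>2 \<le> t * (2 * ((norm a)\<^sup>2 + (norm b)\<^sup>2))"
      using t by (intro mult_left_mono) auto
    then show ?thesis
      by (simp add: algebra_simps)
  qed
  finally show ?thesis .
qed

lemma Cauchy_at_top_imp_convergent:
  fixes J :: "real \<Rightarrow> 'a::complete_space"
  assumes "\<And>e. e > 0 \<Longrightarrow> \<exists>r. \<forall>R\<ge>r. \<forall>R'\<ge>r. dist (J R) (J R') < e"
  shows "\<exists>L. (J \<longlongrightarrow> L) at_top"
proof -
  have "cauchy_filter (filtermap J at_top)"
    unfolding cauchy_filter_metric_filtermap
  proof (intro allI impI)
    fix e :: real assume "e > 0"
    then obtain r where "\<forall>R\<ge>r. \<forall>R'\<ge>r. dist (J R) (J R') < e"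
      using assms by blast
    then show "\<exists>P. eventually P at_top \<and> (\<forall>R R'. P R \<and> P R' \<longrightarrow> dist (J R) (J R') < e)"
      by (intro exI[of _ "\<lambda>R. r \<le> R"]) (auto simp: eventually_ge_at_top)
  qed
  then have "convergent_filter (filtermap J at_top)"
    by (rule cauchy_filter_convergent)
  then show ?thesis
    by (simp add: convergent_filter_iff filterlim_def)
qed

lemma tendsto_SUP_ennreal_zeroI:
  fixes f :: "'a \<Rightarrow> 'b \<Rightarrow> real"
  assumes "\<And>e. e > 0 \<Longrightarrow> \<forall>\<^sub>F x in F. \<forall>q\<in>Q. f x q \<le> e"
  shows "((\<lambda>x. SUP q\<in>Q. ennreal (f x q)) \<longlongrightarrow> 0) F"
proof (rule order_tendstoI)
  fix a :: ennreal assume "0 < a"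
  then obtain b where b: "0 < b" "b < a"
    using dense by blast
  define e where "e = enn2real b"
  have e: "0 < e" "ennreal e < a"
    using b by (auto simp: e_def enn2real_positive_iff less_top[symmetric] ennreal_enn2real_if)
  show "\<forall>\<^sub>F x in F. (SUP q\<in>Q. ennreal (f x q)) < a"
    using assms[OF e(1)]
    by eventually_elim (rule le_less_trans[OF SUP_least e(2)], simp add: ennreal_leI)
qed simp

section \<open>The Fourier integral\<close>

definition fourier_integral :: "(real \<Rightarrow> complex) \<Rightarrow> real \<Rightarrow> complex" where
  "fourier_integral f \<xi> = (LINT x|lborel. exp (- \<i> * complex_of_real (x * \<xi>)) * f x)"

lemma fourier_eq_fourier_integral:
  "fourier f \<xi> = complex_of_real (1 / sqrt (2 * pi)) * fourier_integral f \<xi>"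
  unfolding fourier_def fourier_integral_def ..

lemma norm_exp_minus_i_times [simp]: "norm (exp (- \<i> * complex_of_real t)) = 1"
  using norm_exp_i_times[of "- t"] by simp

lemma borel_measurable_fourier_integral [measurable]:
  assumes [measurable]: "f \<in> borel_measurable borel"
  shows "fourier_integral f \<in> borel_measurable borel"
  unfolding fourier_integral_def by measurable

lemma borel_measurable_fourier [measurable]:
  assumes [measurable]: "f \<in> borel_measurable borel"
  shows "fourier f \<in> borel_measurable borel"
  unfolding fourier_def by measurable

lemma norm_fourier_integral_le: "norm (fourier_integral f \<xi>) \<le> (LINT x|lborel. norm (f x))"
  unfolding fourier_integral_def
  by (rule order_trans[OF integral_norm_bound]) (simp add: norm_mult)

lemma fourier_diff:
  assumes "integrable lborel f" "integrable lborel g"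
  shows "fourier (\<lambda>x. f x - g x) \<xi> = fourier f \<xi> - fourier g \<xi>"
proof -
  have "fourier_integral (\<lambda>x. f x - g x) \<xi> = fourier_integral f \<xi> - fourier_integral g \<xi>"
    unfolding fourier_integral_def right_diff_distrib
    using assms by (intro Bochner_Integration.integral_diff integrable_unimodular_mult) auto
  then show ?thesis unfolding fourier_eq_fourier_integral by (simp only: right_diff_distrib)
qed

lemma fourier_shift:
  assumes "integrable lborel f"
  shows "fourier (\<lambda>x. f (x + y)) \<xi> = exp (\<i> * complex_of_real (y * \<xi>)) * fourier f \<xi>"
proof -
  have "fourier_integral (\<lambda>x. f (x + y)) \<xi>
      = (LINT z|lborel. exp (- \<i> * complex_of_real ((z - y) * \<xi>)) * f z)"
    using lborel_integral_real_affine[of 1 "\<lambda>z. exp (- \<i> * complex_of_real ((z - y) * \<xi>)) * f z" y]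
    unfolding fourier_integral_def by (simp add: add.commute)
  also have "\<dots> = (LINT z|lborel. exp (\<i> * complex_of_real (y * \<xi>)) * (exp (- \<i> * complex_of_real (z * \<xi>)) * f z))"
    unfolding mult.assoc[symmetric] mult_exp_exp
    by (intro Bochner_Integration.integral_cong refl arg_cong2[where f = times] arg_cong[where f = exp])
       (simp_all add: algebra_simps)
  finally have "fourier_integral (\<lambda>x. f (x + y)) \<xi> = exp (\<i> * complex_of_real (y * \<xi>)) * fourier_integral f \<xi>"
    unfolding fourier_integral_def by simp
  then show ?thesis unfolding fourier_eq_fourier_integral by (simp add: ac_simps)
qed

lemma fourier_shift_diff:
  assumes "integrable lborel f"
  shows "fourier (\<lambda>x. f (x + y) - f x) \<xi> = (exp (\<i> * complex_of_real (y * \<xi>)) - 1) * fourier f \<xi>"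
proof -
  have "fourier (\<lambda>x. f (x + y) - f x) \<xi> = fourier (\<lambda>x. f (x + y)) \<xi> - fourier f \<xi>"
    by (rule fourier_diff[OF integrable_lborel_shift[OF assms] assms])
  then show ?thesis by (simp add: fourier_shift[OF assms] algebra_simps)
qed

lemma integral_fourier_integral_mult:
  fixes f g :: "real \<Rightarrow> complex"
  assumes f: "integrable lborel f" and g: "integrable lborel g"
  shows "(LINT \<xi>|lborel. fourier_integral f \<xi> * g \<xi>) = (LINT x|lborel. f x * fourier_integral g x)"
proof -
  have [measurable]: "f \<in> borel_measurable borel" "g \<in> borel_measurable borel"
    using f g by auto
  define k where "k x \<xi> = f x * (exp (- \<i> * complex_of_real (x * \<xi>)) * g \<xi>)" for x \<xi>
  have "integrable (lborel \<Otimes>\<^sub>M lborel) (case_prod k)"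
  proof (rule lborel_pair.Fubini_integrable)
    show "case_prod k \<in> borel_measurable (lborel \<Otimes>\<^sub>M lborel)"
      unfolding k_def by measurable
    have "integrable lborel (\<lambda>x. norm (f x) * (LINT \<xi>|lborel. norm (g \<xi>)))"
      using f by (intro integrable_mult_left integrable_norm)
    then show "integrable lborel (\<lambda>x. LINT \<xi>|lborel. norm (case_prod k (x, \<xi>)))"
      unfolding k_def by (simp add: norm_mult)
    show "AE x in lborel. integrable lborel (\<lambda>\<xi>. case_prod k (x, \<xi>))"
      unfolding k_def case_prod_conv
      by (intro AE_I2 integrable_mult_right integrable_unimodular_mult g) auto
  qed
  then have "(LINT \<xi>|lborel. LINT x|lborel. k x \<xi>) = (LINT x|lborel. LINT \<xi>|lborel. k x \<xi>)"
    by (rule lborel_pair.Fubini_integral)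
  moreover have "fourier_integral f \<xi> * g \<xi> = (LINT x|lborel. k x \<xi>)" for \<xi>
    unfolding k_def fourier_integral_def integral_mult_left_zero[symmetric]
    by (simp add: ac_simps)
  moreover have "f x * fourier_integral g x = (LINT \<xi>|lborel. k x \<xi>)" for x
    unfolding k_def fourier_integral_def integral_mult_right_zero[symmetric]
    by (simp add: ac_simps)
  ultimately show ?thesis
    by simp
qed

section \<open>Gaussians\<close>

definition gauss_kernel :: "real \<Rightarrow> real \<Rightarrow> real" where
  "gauss_kernel s t = 2 * pi * normal_density 0 (1 / s) t"

lemma gauss_kernel_nonneg: "s > 0 \<Longrightarrow> 0 \<le> gauss_kernel s t"
  unfolding gauss_kernel_def by (simp add: normal_density_nonneg)

lemma borel_measurable_gauss_kernel [measurable]: "gauss_kernel s \<in> borel_measurable borel"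
  unfolding gauss_kernel_def normal_density_def by measurable

lemma gauss_kernel_minus: "gauss_kernel s (- t) = gauss_kernel s t"
  unfolding gauss_kernel_def normal_density_def by simp

lemma nn_integral_gauss_kernel:
  assumes "s > 0"
  shows "(\<integral>\<^sup>+t. ennreal (gauss_kernel s t) \<partial>lborel) = ennreal (2 * pi)"
proof -
  have "(\<integral>\<^sup>+t. ennreal (gauss_kernel s t) \<partial>lborel) = ennreal (LINT t|lborel. gauss_kernel s t)"
    using assms unfolding gauss_kernel_def
    by (intro nn_integral_eq_integral) (auto simp: normal_density_nonneg)
  then show ?thesis
    using assms unfolding gauss_kernel_def by simp
qed

lemma gauss_kernel_eq:
  assumes s: "s > 0"
  shows "gauss_kernel s t = s * sqrt (2 * pi) * exp (- (s * t)\<^sup>2 / 2)"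
proof -
  have a: "sqrt (2 * pi * (1 / s)\<^sup>2) = sqrt (2 * pi) / s"
    using s by (simp add: real_sqrt_mult real_sqrt_divide power_divide)
  have b: "- (t - 0)\<^sup>2 / (2 * (1 / s)\<^sup>2) = - (s * t)\<^sup>2 / 2"
    using s by (simp add: power2_eq_square field_simps)
  have c: "2 * pi = sqrt (2 * pi) * sqrt (2 * pi)"
    by simp
  show ?thesis
    unfolding gauss_kernel_def normal_density_def a b using s by (subst (2) c) (simp add: field_simps)
qed

lemma integrable_gaussian:
  fixes s :: real
  assumes "s > 0"
  shows "integrable lborel (\<lambda>\<xi>. exp (- \<xi>\<^sup>2 / (2 * s\<^sup>2)))"
proof -
  have "integrable lborel (\<lambda>\<xi>. sqrt (2 * pi * s\<^sup>2) * normal_density 0 s \<xi>)"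
    using assms by (intro integrable_mult_right integrable_normal_density)
  moreover have "sqrt (2 * pi * s\<^sup>2) * normal_density 0 s \<xi> = exp (- \<xi>\<^sup>2 / (2 * s\<^sup>2))" for \<xi>
    using assms unfolding normal_density_def by simp
  ultimately show ?thesis
    by simp
qed

lemma integral_exp_i_mult_std_gaussian:
  "(LINT x|lborel. exp (\<i> * complex_of_real (u * x)) * complex_of_real (exp (- x\<^sup>2 / 2)))
    = complex_of_real (sqrt (2 * pi) * exp (- u\<^sup>2 / 2))"
proof -
  have "char std_normal_distribution u
      = (LINT x|lborel. std_normal_density x *\<^sub>R exp (\<i> * complex_of_real (u * x)))"
    unfolding char_def by (subst integral_density) (auto simp: normal_density_nonneg)
  also have "\<dots> = complex_of_real (1 / sqrt (2 * pi))
      * (LINT x|lborel. exp (\<i> * complex_of_real (u * x)) * complex_of_real (exp (- x\<^sup>2 / 2)))"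
    by (simp add: std_normal_density_def scaleR_conv_of_real mult_ac)
  finally show ?thesis
    by (simp add: char_std_normal_distribution field_simps)
qed

lemma fourier_integral_gaussian:
  assumes s: "s > 0"
  shows "fourier_integral (\<lambda>\<xi>. complex_of_real (exp (- \<xi>\<^sup>2 / (2 * s\<^sup>2)))) t
    = complex_of_real (gauss_kernel s t)"
proof -
  let ?g = "\<lambda>\<xi>. exp (- \<i> * complex_of_real (\<xi> * t)) * complex_of_real (exp (- \<xi>\<^sup>2 / (2 * s\<^sup>2)))"
  have "fourier_integral (\<lambda>\<xi>. complex_of_real (exp (- \<xi>\<^sup>2 / (2 * s\<^sup>2)))) t = s *\<^sub>R (LINT x|lborel. ?g (0 + s * x))"
    using lborel_integral_real_affine[of s ?g 0] s unfolding fourier_integral_def by simp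
  also have "(LINT x|lborel. ?g (0 + s * x))
      = (LINT x|lborel. exp (\<i> * complex_of_real ((- (s * t)) * x)) * complex_of_real (exp (- x\<^sup>2 / 2)))"
  proof (intro Bochner_Integration.integral_cong refl)
    fix x
    have "- (0 + s * x)\<^sup>2 / (2 * s\<^sup>2) = - x\<^sup>2 / 2"
      using s by (simp add: power2_eq_square field_simps)
    moreover have "- \<i> * complex_of_real ((0 + s * x) * t) = \<i> * complex_of_real ((- (s * t)) * x)"
      by (simp add: algebra_simps)
    ultimately show "?g (0 + s * x) = exp (\<i> * complex_of_real ((- (s * t)) * x)) * complex_of_real (exp (- x\<^sup>2 / 2))"
      by (simp only:)
  qed
  finally show ?thesis
    unfolding integral_exp_i_mult_std_gaussian gauss_kernel_eq[OF s] by (simp add: scaleR_conv_of_real)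
qed

lemma fourier_integral_gauss_mult_cnj:
  fixes f :: "real \<Rightarrow> complex"
  assumes f: "integrable lborel f" and s: "s > 0"
  shows "fourier_integral (\<lambda>\<xi>. complex_of_real (exp (- \<xi>\<^sup>2 / (2 * s\<^sup>2))) * cnj (fourier_integral f \<xi>)) x
    = (LINT y|lborel. cnj (f y) * complex_of_real (gauss_kernel s (x - y)))"
proof -
  define h where "h \<xi> = complex_of_real (exp (- \<xi>\<^sup>2 / (2 * s\<^sup>2)))" for \<xi>
  have h_int: "integrable lborel h"
    unfolding h_def using integrable_gaussian[OF s] by simp
  have modulated: "fourier_integral (\<lambda>\<xi>. exp (\<i> * complex_of_real (x * \<xi>)) * h \<xi>) y
      = complex_of_real (gauss_kernel s (x - y))" for y
  proof -
    have "fourier_integral (\<lambda>\<xi>. exp (\<i> * complex_of_real (x * \<xi>)) * h \<xi>) y = fourier_integral h (y - x)"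
      unfolding fourier_integral_def mult.assoc[symmetric] mult_exp_exp
      by (intro Bochner_Integration.integral_cong refl arg_cong2[where f = times] arg_cong[where f = exp])
         (simp add: algebra_simps)
    then show ?thesis
      using fourier_integral_gaussian[OF s, of "y - x"] gauss_kernel_minus[of s "y - x"]
      unfolding h_def by simp
  qed
  have "fourier_integral (\<lambda>\<xi>. h \<xi> * cnj (fourier_integral f \<xi>)) x
      = cnj (LINT \<xi>|lborel. fourier_integral f \<xi> * (exp (\<i> * complex_of_real (x * \<xi>)) * h \<xi>))"
    unfolding fourier_integral_def[of "\<lambda>\<xi>. h \<xi> * cnj (fourier_integral f \<xi>)"] Bochner_Integration.integral_cnj[symmetric]
    by (intro Bochner_Integration.integral_cong refl) (simp add: h_def exp_cnj mult_ac)
  also have "\<dots> = cnj (LINT y|lborel. f y * fourier_integral (\<lambda>\<xi>. exp (\<i> * complex_of_real (x * \<xi>)) * h \<xi>) y)"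
    by (subst integral_fourier_integral_mult[OF f]) (auto intro!: integrable_unimodular_mult h_int)
  also have "\<dots> = cnj (LINT y|lborel. f y * complex_of_real (gauss_kernel s (x - y)))"
    unfolding modulated ..
  finally show ?thesis
    unfolding h_def
    by (simp add: Bochner_Integration.integral_cnj[symmetric] del: Bochner_Integration.integral_cnj)
qed

section \<open>Plancherel inequality\<close>

lemma nn_integral_convolution_form_le:
  fixes f :: "real \<Rightarrow> complex" and k :: "real \<Rightarrow> real"
  assumes [measurable]: "f \<in> borel_measurable borel" "k \<in> borel_measurable borel"
    and k: "\<And>t. 0 \<le> k t"
  shows "(\<integral>\<^sup>+x. \<integral>\<^sup>+y. ennreal (norm (f x) * norm (f y) * k (x - y)) \<partial>lborel \<partial>lborel)
    \<le> (\<integral>\<^sup>+t. ennreal (k t) \<partial>lborel) * (\<integral>\<^sup>+x. ennreal ((norm (f x))\<^sup>2) \<partial>lborel)"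
    (is "?I \<le> ?K * ?A")
proof -
  define a where "a x y = ennreal ((norm (f x))\<^sup>2) * ennreal (k (x - y))" for x y
  define b where "b x y = ennreal ((norm (f y))\<^sup>2) * ennreal (k (x - y))" for x y
  have pointwise: "2 * ennreal (norm (f x) * norm (f y) * k (x - y)) \<le> a x y + b x y" for x y
  proof -
    have "2 * (norm (f x) * norm (f y)) \<le> (norm (f x))\<^sup>2 + (norm (f y))\<^sup>2"
      using zero_le_power2[of "norm (f x) - norm (f y)"] by (simp add: power2_eq_square algebra_simps)
    then have "2 * (norm (f x) * norm (f y)) * k (x - y) \<le> ((norm (f x))\<^sup>2 + (norm (f y))\<^sup>2) * k (x - y)"
      using k by (rule mult_right_mono)
    then have "ennreal (2 * (norm (f x) * norm (f y) * k (x - y)))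
        \<le> ennreal ((norm (f x))\<^sup>2 * k (x - y) + (norm (f y))\<^sup>2 * k (x - y))"
      by (intro ennreal_leI) (simp add: algebra_simps)
    also have "\<dots> = a x y + b x y"
      unfolding a_def b_def using k by (simp add: ennreal_mult ennreal_plus)
    finally show ?thesis
      by (simp add: ennreal_mult')
  qed
  have "2 * ?I = (\<integral>\<^sup>+x. \<integral>\<^sup>+y. 2 * ennreal (norm (f x) * norm (f y) * k (x - y)) \<partial>lborel \<partial>lborel)"
    by (subst nn_integral_cmult[symmetric]) (measurable, intro nn_integral_cong nn_integral_cmult[symmetric], measurable)
  also have "\<dots> \<le> (\<integral>\<^sup>+x. \<integral>\<^sup>+y. a x y + b x y \<partial>lborel \<partial>lborel)"
    by (intro nn_integral_mono pointwise)
  also have "\<dots> = ?K * ?A + ?K * ?A"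
  proof -
    have "(\<integral>\<^sup>+x. \<integral>\<^sup>+y. a x y \<partial>lborel \<partial>lborel) = ?K * ?A" "(\<integral>\<^sup>+x. \<integral>\<^sup>+y. b x y \<partial>lborel \<partial>lborel) = ?K * ?A"
      unfolding a_def b_def by (rule nn_integral_kernel_translates; measurable)+
    then show ?thesis
      unfolding a_def b_def by (simp add: nn_integral_add)
  qed
  also have "\<dots> = 2 * (?K * ?A)"
    by (simp only: mult_2)
  finally show ?thesis
    by (subst (asm) ennreal_mult_le_mult_iff) auto
qed

lemma gauss_weighted_sq_fourier_integral:
  fixes f :: "real \<Rightarrow> complex"
  assumes f: "integrable lborel f" and s: "s > 0"
  shows integrable_gauss_weighted_sq_fourier_integral:
      "integrable lborel (\<lambda>\<xi>. exp (- \<xi>\<^sup>2 / (2 * s\<^sup>2)) * (norm (fourier_integral f \<xi>))\<^sup>2)"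
    and integral_gauss_weighted_sq_fourier_integral:
      "complex_of_real (LINT \<xi>|lborel. exp (- \<xi>\<^sup>2 / (2 * s\<^sup>2)) * (norm (fourier_integral f \<xi>))\<^sup>2)
        = (LINT x|lborel. f x * (LINT y|lborel. cnj (f y) * complex_of_real (gauss_kernel s (x - y))))"
proof -
  have [measurable]: "f \<in> borel_measurable borel"
    using f by auto
  define h where "h \<xi> = exp (- \<xi>\<^sup>2 / (2 * s\<^sup>2))" for \<xi>
  define F where "F = fourier_integral f"
  define N where "N = (LINT x|lborel. norm (f x))"
  have F_le: "norm (F \<xi>) \<le> N" for \<xi>
    unfolding F_def N_def by (rule norm_fourier_integral_le)
  have N_nonneg: "0 \<le> N" and h_nonneg: "0 \<le> h \<xi>" for \<xi>
    unfolding N_def h_def by simp_all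
  have h_int: "integrable lborel h"
    unfolding h_def by (rule integrable_gaussian[OF s])
  have [measurable]: "h \<in> borel_measurable borel" "F \<in> borel_measurable borel"
    unfolding h_def F_def by measurable
  have hF_int: "integrable lborel (\<lambda>\<xi>. complex_of_real (h \<xi>) * cnj (F \<xi>))"
  proof (rule Bochner_Integration.integrable_bound[where f = "\<lambda>\<xi>. N * h \<xi>"])
    show "AE \<xi> in lborel. norm (complex_of_real (h \<xi>) * cnj (F \<xi>)) \<le> norm (N * h \<xi>)"
      using F_le h_nonneg N_nonneg by (intro AE_I2) (simp add: norm_mult abs_mult mult.commute[of "h _"] mult_right_mono)
  qed (use h_int in auto)
  show "integrable lborel (\<lambda>\<xi>. exp (- \<xi>\<^sup>2 / (2 * s\<^sup>2)) * (norm (fourier_integral f \<xi>))\<^sup>2)"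
    unfolding h_def[symmetric] F_def[symmetric]
  proof (rule Bochner_Integration.integrable_bound[where f = "\<lambda>\<xi>. N\<^sup>2 * h \<xi>"])
    show "AE \<xi> in lborel. norm (h \<xi> * (norm (F \<xi>))\<^sup>2) \<le> norm (N\<^sup>2 * h \<xi>)"
      using F_le h_nonneg N_nonneg by (intro AE_I2) (simp add: abs_mult mult.commute mult_left_mono power_mono)
  qed (use h_int in auto)
  have "complex_of_real (LINT \<xi>|lborel. h \<xi> * (norm (F \<xi>))\<^sup>2)
      = (LINT \<xi>|lborel. F \<xi> * (complex_of_real (h \<xi>) * cnj (F \<xi>)))"
    unfolding integral_complex_of_real[symmetric]
    by (intro Bochner_Integration.integral_cong refl) (simp add: complex_norm_square mult_ac del: of_real_power)
  then show "complex_of_real (LINT \<xi>|lborel. exp (- \<xi>\<^sup>2 / (2 * s\<^sup>2)) * (norm (fourier_integral f \<xi>))\<^sup>2)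
      = (LINT x|lborel. f x * (LINT y|lborel. cnj (f y) * complex_of_real (gauss_kernel s (x - y))))"
    unfolding F_def h_def integral_fourier_integral_mult[OF f hF_int[unfolded F_def h_def]]
      fourier_integral_gauss_mult_cnj[OF f s] .
qed

lemma nn_integral_gauss_weighted_fourier_integral_le:
  fixes f :: "real \<Rightarrow> complex"
  assumes f: "integrable lborel f" and s: "s > 0"
  shows "(\<integral>\<^sup>+\<xi>. ennreal (exp (- \<xi>\<^sup>2 / (2 * s\<^sup>2)) * (norm (fourier_integral f \<xi>))\<^sup>2) \<partial>lborel)
    \<le> 2 * pi * (\<integral>\<^sup>+x. ennreal ((norm (f x))\<^sup>2) \<partial>lborel)"
proof -
  have [measurable]: "f \<in> borel_measurable borel"
    using f by auto
  define \<Psi> where "\<Psi> x = (LINT y|lborel. cnj (f y) * complex_of_real (gauss_kernel s (x - y)))" for x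
  have \<Psi>_le: "ennreal (norm (\<Psi> x)) \<le> (\<integral>\<^sup>+y. ennreal (norm (f y) * gauss_kernel s (x - y)) \<partial>lborel)" for x
    using norm_integral_le_nn_integral[of lborel "\<lambda>y. cnj (f y) * complex_of_real (gauss_kernel s (x - y))"]
    unfolding \<Psi>_def by (simp add: norm_mult gauss_kernel_nonneg[OF s])
  have "(\<integral>\<^sup>+\<xi>. ennreal (exp (- \<xi>\<^sup>2 / (2 * s\<^sup>2)) * (norm (fourier_integral f \<xi>))\<^sup>2) \<partial>lborel)
      = ennreal (LINT \<xi>|lborel. exp (- \<xi>\<^sup>2 / (2 * s\<^sup>2)) * (norm (fourier_integral f \<xi>))\<^sup>2)"
    by (intro nn_integral_eq_integral integrable_gauss_weighted_sq_fourier_integral f s) auto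
  also have "\<dots> \<le> ennreal (norm (LINT x|lborel. f x * \<Psi> x))"
    unfolding \<Psi>_def integral_gauss_weighted_sq_fourier_integral[OF f s, symmetric] by (intro ennreal_leI) simp
  also have "\<dots> \<le> (\<integral>\<^sup>+x. ennreal (norm (f x)) * ennreal (norm (\<Psi> x)) \<partial>lborel)"
    using norm_integral_le_nn_integral[of lborel "\<lambda>x. f x * \<Psi> x"] by (simp add: norm_mult ennreal_mult)
  also have "\<dots> \<le> (\<integral>\<^sup>+x. ennreal (norm (f x)) * (\<integral>\<^sup>+y. ennreal (norm (f y) * gauss_kernel s (x - y)) \<partial>lborel) \<partial>lborel)"
    by (intro nn_integral_mono mult_left_mono \<Psi>_le) simp
  also have "\<dots> = (\<integral>\<^sup>+x. \<integral>\<^sup>+y. ennreal (norm (f x) * norm (f y) * gauss_kernel s (x - y)) \<partial>lborel \<partial>lborel)"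
    by (intro nn_integral_cong, subst nn_integral_cmult[symmetric])
       (auto simp: ennreal_mult[symmetric] gauss_kernel_nonneg[OF s] mult.assoc intro!: nn_integral_cong)
  also have "\<dots> \<le> 2 * pi * (\<integral>\<^sup>+x. ennreal ((norm (f x))\<^sup>2) \<partial>lborel)"
    using nn_integral_convolution_form_le[of f "gauss_kernel s"]
    by (simp add: nn_integral_gauss_kernel[OF s] gauss_kernel_nonneg[OF s])
  finally show ?thesis .
qed

lemma nn_integral_sq_fourier_integral_le:
  fixes f :: "real \<Rightarrow> complex"
  assumes f: "integrable lborel f"
  shows "(\<integral>\<^sup>+\<xi>. ennreal ((norm (fourier_integral f \<xi>))\<^sup>2) \<partial>lborel)
    \<le> 2 * pi * (\<integral>\<^sup>+x. ennreal ((norm (f x))\<^sup>2) \<partial>lborel)"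
proof -
  have [measurable]: "f \<in> borel_measurable borel"
    using f by auto
  define u where "u n \<xi> = ennreal (exp (- \<xi>\<^sup>2 / (2 * (real (Suc n))\<^sup>2)) * (norm (fourier_integral f \<xi>))\<^sup>2)"
    for n \<xi>
  have u_lim: "(\<lambda>n. u n \<xi>) \<longlonglongrightarrow> ennreal ((norm (fourier_integral f \<xi>))\<^sup>2)" for \<xi>
  proof -
    have "(\<lambda>n. exp (- (\<xi>\<^sup>2 / 2) * (inverse (real (Suc n)))\<^sup>2) * (norm (fourier_integral f \<xi>))\<^sup>2)
        \<longlonglongrightarrow> exp (- (\<xi>\<^sup>2 / 2) * 0\<^sup>2) * (norm (fourier_integral f \<xi>))\<^sup>2"
      by (intro tendsto_intros LIMSEQ_inverse_real_of_nat)
    moreover have "(\<lambda>n. exp (- (\<xi>\<^sup>2 / 2) * (inverse (real (Suc n)))\<^sup>2) * (norm (fourier_integral f \<xi>))\<^sup>2)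
        = (\<lambda>n. exp (- \<xi>\<^sup>2 / (2 * (real (Suc n))\<^sup>2)) * (norm (fourier_integral f \<xi>))\<^sup>2)"
      by (rule ext) (simp add: field_simps power2_eq_square)
    ultimately show ?thesis
      unfolding u_def by (intro tendsto_ennrealI) simp
  qed
  have "(\<integral>\<^sup>+\<xi>. ennreal ((norm (fourier_integral f \<xi>))\<^sup>2) \<partial>lborel) = (\<integral>\<^sup>+\<xi>. liminf (\<lambda>n. u n \<xi>) \<partial>lborel)"
    by (intro nn_integral_cong lim_imp_Liminf[symmetric] u_lim) simp
  also have "\<dots> \<le> liminf (\<lambda>n. \<integral>\<^sup>+\<xi>. u n \<xi> \<partial>lborel)"
    by (rule nn_integral_liminf) (simp add: u_def)
  also have "\<dots> \<le> 2 * pi * (\<integral>\<^sup>+x. ennreal ((norm (f x))\<^sup>2) \<partial>lborel)"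
    unfolding u_def
    by (intro Liminf_le always_eventually allI nn_integral_gauss_weighted_fourier_integral_le f) simp_all
  finally show ?thesis .
qed

lemma nn_integral_sq_fourier_le:
  fixes f :: "real \<Rightarrow> complex"
  assumes f: "integrable lborel f"
  shows "(\<integral>\<^sup>+\<xi>. ennreal ((norm (fourier f \<xi>))\<^sup>2) \<partial>lborel) \<le> (\<integral>\<^sup>+x. ennreal ((norm (f x))\<^sup>2) \<partial>lborel)"
proof -
  have [measurable]: "f \<in> borel_measurable borel"
    using f by auto
  have "ennreal ((norm (fourier f \<xi>))\<^sup>2) = ennreal (1 / (2 * pi)) * ennreal ((norm (fourier_integral f \<xi>))\<^sup>2)" for \<xi>
    unfolding fourier_eq_fourier_integral
    by (simp add: ennreal_mult[symmetric] norm_mult power_mult_distrib norm_divide power_divide)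
  then have "(\<integral>\<^sup>+\<xi>. ennreal ((norm (fourier f \<xi>))\<^sup>2) \<partial>lborel)
      = ennreal (1 / (2 * pi)) * (\<integral>\<^sup>+\<xi>. ennreal ((norm (fourier_integral f \<xi>))\<^sup>2) \<partial>lborel)"
    by (simp add: nn_integral_cmult)
  also have "\<dots> \<le> ennreal (1 / (2 * pi)) * (2 * pi * (\<integral>\<^sup>+x. ennreal ((norm (f x))\<^sup>2) \<partial>lborel))"
    by (intro mult_left_mono nn_integral_sq_fourier_integral_le f) simp
  also have "\<dots> = (\<integral>\<^sup>+x. ennreal ((norm (f x))\<^sup>2) \<partial>lborel)"
    by (simp add: mult.assoc[symmetric] ennreal_mult[symmetric])
  finally show ?thesis .
qed

section \<open>High frequencies\<close>

lemma norm_exp_i_minus_one_sq: "(norm (exp (\<i> * complex_of_real t) - 1))\<^sup>2 = 2 - 2 * cos t"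
proof -
  have "exp (\<i> * complex_of_real t) - 1 = Complex (cos t - 1) (sin t)"
    by (simp add: exp_Euler Complex_eq cos_of_real sin_of_real)
  then have "(norm (exp (\<i> * complex_of_real t) - 1))\<^sup>2 = (cos t - 1)\<^sup>2 + (sin t)\<^sup>2"
    by (simp add: cmod_power2)
  also have "\<dots> = 2 - 2 * cos t"
    using sin_cos_squared_add[of t] by (simp add: power2_eq_square algebra_simps)
  finally show ?thesis .
qed

lemma has_integral_two_minus_two_cos:
  fixes \<eta> \<xi> :: real
  assumes "0 \<le> \<eta>" "\<xi> \<noteq> 0"
  shows "((\<lambda>y. 2 - 2 * cos (y * \<xi>)) has_integral (2 * \<eta> - 2 * sin (\<eta> * \<xi>) / \<xi>)) {0..\<eta>}"
proof -
  have "((\<lambda>y. 2 - 2 * cos (y * \<xi>)) has_integral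
      ((2 * \<eta> - 2 * sin (\<eta> * \<xi>) / \<xi>) - (2 * 0 - 2 * sin (0 * \<xi>) / \<xi>))) {0..\<eta>}"
  proof (rule fundamental_theorem_of_calculus)
    fix y
    have "((\<lambda>y. 2 * y - 2 * sin (y * \<xi>) / \<xi>) has_real_derivative (2 - 2 * cos (y * \<xi>))) (at y within {0..\<eta>})"
      using assms(2) by (auto intro!: derivative_eq_intros simp: field_simps)
    then show "((\<lambda>y. 2 * y - 2 * sin (y * \<xi>) / \<xi>) has_vector_derivative (2 - 2 * cos (y * \<xi>))) (at y within {0..\<eta>})"
      by (simp add: has_real_derivative_iff_has_vector_derivative)
  qed (use assms in simp)
  then show ?thesis
    by simp
qed

lemma nn_integral_sq_exp_i_minus_one_ge:
  assumes \<eta>: "\<eta> > 0" and \<xi>: "2 / \<eta> \<le> \<bar>\<xi>\<bar>"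
  shows "ennreal \<eta> \<le> (\<integral>\<^sup>+y. indicator {0..\<eta>} y * ennreal ((norm (exp (\<i> * complex_of_real (y * \<xi>)) - 1))\<^sup>2) \<partial>lborel)"
proof -
  have \<xi>_ne: "\<xi> \<noteq> 0"
    using \<xi> \<eta> by (auto simp: field_simps)
  have "(\<integral>\<^sup>+y. ennreal (indicator {0..\<eta>} y * (2 - 2 * cos (y * \<xi>))) \<partial>lborel)
      = ennreal (2 * \<eta> - 2 * sin (\<eta> * \<xi>) / \<xi>)"
    using has_integral_two_minus_two_cos[OF less_imp_le[OF \<eta>] \<xi>_ne]
    by (rule nn_integral_has_integral_lebesgue[rotated]) (simp add: cos_le_one)
  moreover have "indicator {0..\<eta>} y * ennreal ((norm (exp (\<i> * complex_of_real (y * \<xi>)) - 1))\<^sup>2)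
      = ennreal (indicator {0..\<eta>} y * (2 - 2 * cos (y * \<xi>)))" for y
    unfolding norm_exp_i_minus_one_sq by (simp split: split_indicator)
  moreover have "\<eta> \<le> 2 * \<eta> - 2 * sin (\<eta> * \<xi>) / \<xi>"
  proof -
    have "sin (\<eta> * \<xi>) / \<xi> \<le> \<bar>sin (\<eta> * \<xi>)\<bar> / \<bar>\<xi>\<bar>"
      by (metis abs_divide abs_ge_self)
    also have "\<dots> \<le> 1 / \<bar>\<xi>\<bar>"
      by (intro divide_right_mono abs_sin_le_one) simp
    also have "\<dots> \<le> \<eta> / 2"
      using \<xi> \<eta> \<xi>_ne by (simp add: field_simps)
    finally show ?thesis
      by (simp add: mult.commute)
  qed
  ultimately show ?thesis
    by (simp add: ennreal_leI)
qed

lemma high_freq_sq_fourier_le_shift_average: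
  fixes f :: "real \<Rightarrow> complex"
  assumes f: "integrable lborel f" and \<eta>: "\<eta> > 0"
  shows "ennreal \<eta> * (indicator {\<xi>. 2 / \<eta> \<le> \<bar>\<xi>\<bar>} \<xi> * ennreal ((norm (fourier f \<xi>))\<^sup>2))
    \<le> (\<integral>\<^sup>+y. indicator {0..\<eta>} y * ennreal ((norm (fourier (\<lambda>x. f (x + y) - f x) \<xi>))\<^sup>2) \<partial>lborel)"
proof (cases "2 / \<eta> \<le> \<bar>\<xi>\<bar>")
  case True
  then have "ennreal \<eta> * ennreal ((norm (fourier f \<xi>))\<^sup>2)
      \<le> (\<integral>\<^sup>+y. indicator {0..\<eta>} y * ennreal ((norm (exp (\<i> * complex_of_real (y * \<xi>)) - 1))\<^sup>2) \<partial>lborel)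
        * ennreal ((norm (fourier f \<xi>))\<^sup>2)"
    by (intro mult_right_mono nn_integral_sq_exp_i_minus_one_ge \<eta>) auto
  also have "\<dots> = (\<integral>\<^sup>+y. indicator {0..\<eta>} y * ennreal ((norm (fourier (\<lambda>x. f (x + y) - f x) \<xi>))\<^sup>2) \<partial>lborel)"
    unfolding fourier_shift_diff[OF f]
    by (subst nn_integral_multc[symmetric])
       (simp_all add: ennreal_mult[symmetric] norm_mult power_mult_distrib mult.assoc)
  finally show ?thesis
    using True by simp
qed simp

lemma nn_integral_high_freq_fourier_le:
  fixes f :: "real \<Rightarrow> complex"
  assumes f: "integrable lborel f" and \<eta>: "\<eta> > 0"
    and B: "\<And>y. y \<in> {0..\<eta>} \<Longrightarrow> (\<integral>\<^sup>+x. ennreal ((norm (f (x + y) - f x))\<^sup>2) \<partial>lborel) \<le> B"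
  shows "(\<integral>\<^sup>+\<xi>. indicator {\<xi>. 2 / \<eta> \<le> \<bar>\<xi>\<bar>} \<xi> * ennreal ((norm (fourier f \<xi>))\<^sup>2) \<partial>lborel) \<le> B"
proof -
  have [measurable]: "f \<in> borel_measurable borel"
    using f by auto
  define D where "D y \<xi> = ennreal ((norm (fourier (\<lambda>x. f (x + y) - f x) \<xi>))\<^sup>2)" for y \<xi>
  have D_eq: "D = (\<lambda>y \<xi>. ennreal ((norm (exp (\<i> * complex_of_real (y * \<xi>)) - 1))\<^sup>2 * (norm (fourier f \<xi>))\<^sup>2))"
    unfolding D_def fourier_shift_diff[OF f] by (simp add: norm_mult power_mult_distrib)
  have [measurable]: "case_prod D \<in> borel_measurable (lborel \<Otimes>\<^sub>M lborel)"
    unfolding D_eq by measurable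
  have "ennreal \<eta> * (\<integral>\<^sup>+\<xi>. indicator {\<xi>. 2 / \<eta> \<le> \<bar>\<xi>\<bar>} \<xi> * ennreal ((norm (fourier f \<xi>))\<^sup>2) \<partial>lborel)
      \<le> (\<integral>\<^sup>+\<xi>. \<integral>\<^sup>+y. indicator {0..\<eta>} y * D y \<xi> \<partial>lborel \<partial>lborel)"
    unfolding D_def
    by (subst nn_integral_cmult[symmetric]) (measurable, intro nn_integral_mono high_freq_sq_fourier_le_shift_average f \<eta>)
  also have "\<dots> = (\<integral>\<^sup>+y. indicator {0..\<eta>} y * (\<integral>\<^sup>+\<xi>. D y \<xi> \<partial>lborel) \<partial>lborel)"
    by (subst lborel_pair.Fubini') (measurable, simp add: nn_integral_cmult)
  also have "\<dots> \<le> (\<integral>\<^sup>+y. B * indicator {0..\<eta>} y \<partial>lborel)"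
  proof (intro nn_integral_mono)
    fix y
    have "y \<in> {0..\<eta>} \<Longrightarrow> (\<integral>\<^sup>+\<xi>. D y \<xi> \<partial>lborel) \<le> B"
      unfolding D_def using integrable_lborel_shift[OF f] f
      by (intro order_trans[OF nn_integral_sq_fourier_le B] Bochner_Integration.integrable_diff)
    then show "indicator {0..\<eta>} y * (\<integral>\<^sup>+\<xi>. D y \<xi> \<partial>lborel) \<le> B * indicator {0..\<eta>} y"
      by (simp split: split_indicator)
  qed
  also have "\<dots> = ennreal \<eta> * B"
    using \<eta> by (simp add: nn_integral_cmult_indicator mult.commute)
  finally show ?thesis
    using \<eta> by (subst (asm) ennreal_mult_le_mult_iff) auto
qed

section \<open>Square integrable functions and truncations\<close>

lemma L2_norm_nonneg: "0 \<le> L2_norm q"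
  unfolding L2_norm_def by simp

lemma L2_norm_sq: "(L2_norm q)\<^sup>2 = (LINT x|lborel. (norm (q x))\<^sup>2)"
  unfolding L2_norm_def by simp

lemma L2_spaceD:
  assumes "q \<in> L2_space"
  shows L2_space_measurable: "q \<in> borel_measurable borel"
    and L2_space_integrable: "integrable lborel (\<lambda>x. (norm (q x))\<^sup>2)"
  using assms unfolding L2_space_def by auto

lemma nn_integral_sq_norm_eq_L2_norm:
  assumes "q \<in> L2_space"
  shows "(\<integral>\<^sup>+x. ennreal ((norm (q x))\<^sup>2) \<partial>lborel) = ennreal ((L2_norm q)\<^sup>2)"
  unfolding L2_norm_sq using L2_spaceD[OF assms] by (intro nn_integral_eq_integral) auto

lemma L2_space_shift_diff:
  assumes q: "q \<in> L2_space"
  shows "(\<lambda>x. q (x + y) - q x) \<in> L2_space"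
proof -
  note [measurable] = L2_space_measurable[OF q]
  have "integrable lborel (\<lambda>x. (norm (q (x + y) - q x))\<^sup>2)"
  proof (rule Bochner_Integration.integrable_bound)
    show "integrable lborel (\<lambda>x. 2 * (norm (q (x + y)))\<^sup>2 + 2 * (norm (q x))\<^sup>2)"
      using integrable_lborel_shift[OF L2_space_integrable[OF q]] L2_space_integrable[OF q] by auto
    have "(norm (q (x + y) - q x))\<^sup>2 \<le> 2 * (norm (q (x + y)))\<^sup>2 + 2 * (norm (q x))\<^sup>2" for x
    proof -
      have "(norm (q (x + y) - q x))\<^sup>2 \<le> (norm (q (x + y)) + norm (q x))\<^sup>2"
        by (intro power_mono norm_triangle_ineq4) simp
      also have "\<dots> \<le> 2 * (norm (q (x + y)))\<^sup>2 + 2 * (norm (q x))\<^sup>2"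
        using zero_le_power2[of "norm (q (x + y)) - norm (q x)"] by (simp add: power2_eq_square algebra_simps)
      finally show ?thesis .
    qed
    then show "AE x in lborel. norm ((norm (q (x + y) - q x))\<^sup>2) \<le> norm (2 * (norm (q (x + y)))\<^sup>2 + 2 * (norm (q x))\<^sup>2)"
      by (intro AE_I2) simp
  qed measurable
  then show ?thesis
    unfolding L2_space_def by auto
qed

lemma L2_equicontinuousE:
  assumes "L2_equicontinuous Q" "\<epsilon> > 0"
  obtains \<eta> where "\<eta> > 0" "\<And>q y. q \<in> Q \<Longrightarrow> y \<in> {0..\<eta>} \<Longrightarrow> L2_norm (\<lambda>x. q (x + y) - q x) \<le> \<epsilon>"
proof -
  obtain \<eta> where "\<eta> > 0" and "\<forall>q\<in>Q. \<forall>y. \<bar>y\<bar> < \<eta> \<longrightarrow> L2_norm (\<lambda>x. q (x + y) - q x) < \<epsilon>"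
    using assms unfolding L2_equicontinuous_def by blast
  then show thesis
    by (intro that[of "\<eta> / 2"]) (auto intro: less_imp_le)
qed

lemma borel_measurable_trunc [measurable]:
  assumes [measurable]: "q \<in> borel_measurable borel"
  shows "trunc R q \<in> borel_measurable borel"
  unfolding trunc_def by measurable

lemma integrable_trunc:
  assumes q: "q \<in> L2_space"
  shows "integrable lborel (trunc R q)"
proof (rule Bochner_Integration.integrable_bound)
  show "integrable lborel (\<lambda>x. indicator {-R..R} x + (norm (q x))\<^sup>2 :: real)"
    using L2_space_integrable[OF q] emeasure_lborel_cbox_finite[of "-R" R]
    by (intro Bochner_Integration.integrable_add integrable_real_indicator) auto
  have "norm (q x) \<le> 1 + (norm (q x))\<^sup>2" for x
  proof (cases "norm (q x) \<le> 1")
    case False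
    then have "norm (q x) * 1 \<le> norm (q x) * norm (q x)"
      by (intro mult_left_mono) auto
    then show ?thesis
      by (simp add: power2_eq_square)
  qed (simp add: add_increasing2)
  then show "AE x in lborel. norm (trunc R q x) \<le> norm (indicator {-R..R} x + (norm (q x))\<^sup>2 :: real)"
    unfolding trunc_def by (intro AE_I2) (auto split: split_indicator)
qed (use L2_space_measurable[OF q] in measurable)

lemma norm_trunc_le: "norm (trunc R q x) \<le> norm (q x)"
  unfolding trunc_def by auto

lemma sq_norm_trunc_diff_le:
  assumes "r \<le> R" "r \<le> R'"
  shows "(norm (trunc R q x - trunc R' q x))\<^sup>2 \<le> indicator {x. r < \<bar>x\<bar>} x * (norm (q x))\<^sup>2"
  using assms unfolding trunc_def by (auto split: split_indicator)

lemma sq_norm_trunc_minus_le: "(norm (trunc R q x - q x))\<^sup>2 \<le> indicator {x. R < \<bar>x\<bar>} x * (norm (q x))\<^sup>2"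
  unfolding trunc_def by (auto split: split_indicator)

definition L2_tail :: "(real \<Rightarrow> complex) \<Rightarrow> real \<Rightarrow> real" where
  "L2_tail q r = (LINT x|lborel. indicator {x. r < \<bar>x\<bar>} x * (norm (q x))\<^sup>2)"

lemma L2_tail_nonneg: "0 \<le> L2_tail q r"
  unfolding L2_tail_def by simp

lemma nn_integral_L2_tail:
  assumes q: "q \<in> L2_space"
  shows "(\<integral>\<^sup>+x. ennreal (indicator {x. r < \<bar>x\<bar>} x * (norm (q x))\<^sup>2) \<partial>lborel) = ennreal (L2_tail q r)"
  unfolding L2_tail_def using L2_spaceD[OF q]
  by (intro nn_integral_eq_integral AE_I2 integrable_mult_indicator[where 'b = real, simplified]) auto

lemma tendsto_L2_tail:
  assumes q: "q \<in> L2_space"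
  shows "(L2_tail q \<longlongrightarrow> 0) at_top"
proof -
  note [measurable] = L2_space_measurable[OF q]
  have "((\<lambda>r. LINT x|lborel. indicator {x. r < \<bar>x\<bar>} x * (norm (q x))\<^sup>2) \<longlongrightarrow> (LINT (x::real)|lborel. 0)) at_top"
  proof (rule integral_dominated_convergence_at_top[where w = "\<lambda>x. (norm (q x))\<^sup>2" and M = lborel
        and s = "\<lambda>r x. indicator {x. r < \<bar>x\<bar>} x * (norm (q x))\<^sup>2" and f = "\<lambda>x. 0"])
    show "AE x in lborel. ((\<lambda>r. indicator {x. r < \<bar>x\<bar>} x * (norm (q x))\<^sup>2) \<longlongrightarrow> 0) at_top"
    proof (intro AE_I2 tendsto_eventually)
      fix x
      show "\<forall>\<^sub>F r in at_top. indicator {x. r < \<bar>x\<bar>} x * (norm (q x))\<^sup>2 = (0::real)"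
        using eventually_ge_at_top[of "\<bar>x\<bar>"] by eventually_elim (simp split: split_indicator)
    qed
  qed (use L2_space_integrable[OF q] in \<open>auto split: split_indicator\<close>)
  then show ?thesis
    unfolding L2_tail_def by simp
qed

section \<open>Weighted energy of truncations\<close>

locale weighted_energy =
  fixes q :: "real \<Rightarrow> complex" and w :: "real \<Rightarrow> real"
  assumes q_L2: "q \<in> L2_space"
    and w_measurable [measurable]: "w \<in> borel_measurable borel"
    and w_nonneg: "\<And>\<xi>. 0 \<le> w \<xi>" and w_le_one: "\<And>\<xi>. w \<xi> \<le> 1"
begin

definition energy :: "real \<Rightarrow> real" where
  "energy R = (LINT \<xi>|lborel. w \<xi> * (norm (fourier (trunc R q) \<xi>))\<^sup>2)"

lemma q_measurable [measurable]: "q \<in> borel_measurable borel"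
  using L2_space_measurable[OF q_L2] .

lemma nn_integral_sq_fourier_trunc_le:
  "(\<integral>\<^sup>+\<xi>. ennreal ((norm (fourier (trunc R q) \<xi>))\<^sup>2) \<partial>lborel) \<le> ennreal ((L2_norm q)\<^sup>2)"
proof -
  have "(\<integral>\<^sup>+\<xi>. ennreal ((norm (fourier (trunc R q) \<xi>))\<^sup>2) \<partial>lborel)
      \<le> (\<integral>\<^sup>+x. ennreal ((norm (trunc R q x))\<^sup>2) \<partial>lborel)"
    by (intro nn_integral_sq_fourier_le integrable_trunc q_L2)
  also have "\<dots> \<le> (\<integral>\<^sup>+x. ennreal ((norm (q x))\<^sup>2) \<partial>lborel)"
    by (intro nn_integral_mono ennreal_leI power_mono norm_trunc_le) simp
  finally show ?thesis
    unfolding nn_integral_sq_norm_eq_L2_norm[OF q_L2] .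
qed

lemma nn_integral_sq_fourier_trunc_diff_le:
  assumes "r \<le> R" "r \<le> R'"
  shows "(\<integral>\<^sup>+\<xi>. ennreal ((norm (fourier (trunc R q) \<xi> - fourier (trunc R' q) \<xi>))\<^sup>2) \<partial>lborel)
    \<le> ennreal (L2_tail q r)"
proof -
  have "(\<integral>\<^sup>+\<xi>. ennreal ((norm (fourier (trunc R q) \<xi> - fourier (trunc R' q) \<xi>))\<^sup>2) \<partial>lborel)
      = (\<integral>\<^sup>+\<xi>. ennreal ((norm (fourier (\<lambda>x. trunc R q x - trunc R' q x) \<xi>))\<^sup>2) \<partial>lborel)"
    using fourier_diff[OF integrable_trunc[OF q_L2] integrable_trunc[OF q_L2], of R R'] by simp
  also have "\<dots> \<le> (\<integral>\<^sup>+x. ennreal ((norm (trunc R q x - trunc R' q x))\<^sup>2) \<partial>lborel)"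
    by (intro nn_integral_sq_fourier_le Bochner_Integration.integrable_diff integrable_trunc q_L2)
  also have "\<dots> \<le> (\<integral>\<^sup>+x. ennreal (indicator {x. r < \<bar>x\<bar>} x * (norm (q x))\<^sup>2) \<partial>lborel)"
    by (intro nn_integral_mono ennreal_leI sq_norm_trunc_diff_le assms)
  finally show ?thesis
    unfolding nn_integral_L2_tail[OF q_L2] .
qed

lemma integrable_sq_fourier_trunc: "integrable lborel (\<lambda>\<xi>. (norm (fourier (trunc R q) \<xi>))\<^sup>2)"
  by (rule integrable_and_integral_le_of_nn_integral_le(1)[OF _ _ _ nn_integral_sq_fourier_trunc_le]) auto

lemma integral_sq_fourier_trunc_le: "(LINT \<xi>|lborel. (norm (fourier (trunc R q) \<xi>))\<^sup>2) \<le> (L2_norm q)\<^sup>2"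
  by (rule integrable_and_integral_le_of_nn_integral_le(2)[OF _ _ _ nn_integral_sq_fourier_trunc_le]) auto

lemma integrable_energy_integrand: "integrable lborel (\<lambda>\<xi>. w \<xi> * (norm (fourier (trunc R q) \<xi>))\<^sup>2)"
proof (rule Bochner_Integration.integrable_bound[OF integrable_sq_fourier_trunc])
  show "AE \<xi> in lborel. norm (w \<xi> * (norm (fourier (trunc R q) \<xi>))\<^sup>2) \<le> norm ((norm (fourier (trunc R q) \<xi>))\<^sup>2)"
    using w_nonneg w_le_one by (intro AE_I2) (simp add: mult_left_le_one_le)
qed measurable

lemma abs_energy_diff_le:
  assumes r: "r \<le> R" "r \<le> R'" and t: "t > 0"
  shows "\<bar>energy R - energy R'\<bar> \<le> L2_tail q r / (2 * t) + 2 * t * (L2_norm q)\<^sup>2"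
proof -
  define a where "a = fourier (trunc R q)"
  define b where "b = fourier (trunc R' q)"
  note a = integrable_sq_fourier_trunc[of R, folded a_def] integral_sq_fourier_trunc_le[of R, folded a_def]
  note b = integrable_sq_fourier_trunc[of R', folded b_def] integral_sq_fourier_trunc_le[of R', folded b_def]
  have ab: "integrable lborel (\<lambda>\<xi>. (norm (a \<xi> - b \<xi>))\<^sup>2)"
    "(LINT \<xi>|lborel. (norm (a \<xi> - b \<xi>))\<^sup>2) \<le> L2_tail q r"
    unfolding a_def b_def
    by (rule integrable_and_integral_le_of_nn_integral_le[OF _ _ L2_tail_nonneg
          nn_integral_sq_fourier_trunc_diff_le[OF r]]; simp)+
  have "\<bar>energy R - energy R'\<bar> = \<bar>LINT \<xi>|lborel. w \<xi> * (norm (a \<xi>))\<^sup>2 - w \<xi> * (norm (b \<xi>))\<^sup>2\<bar>"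
    unfolding energy_def a_def b_def using integrable_energy_integrand by simp
  also have "\<dots> \<le> (LINT \<xi>|lborel. (norm (a \<xi> - b \<xi>))\<^sup>2 / (2 * t) + t * ((norm (a \<xi>))\<^sup>2 + (norm (b \<xi>))\<^sup>2))"
    using integrable_energy_integrand a(1) b(1) ab(1)
    by (intro integral_abs_bound_integral abs_weighted_sq_norm_diff_le w_nonneg w_le_one t)
       (auto simp: a_def b_def)
  also have "\<dots> = (LINT \<xi>|lborel. (norm (a \<xi> - b \<xi>))\<^sup>2) / (2 * t)
      + t * ((LINT \<xi>|lborel. (norm (a \<xi>))\<^sup>2) + (LINT \<xi>|lborel. (norm (b \<xi>))\<^sup>2))"
    using a(1) b(1) ab(1) by simp
  also have "\<dots> \<le> L2_tail q r / (2 * t) + t * ((L2_norm q)\<^sup>2 + (L2_norm q)\<^sup>2)"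
    using a(2) b(2) ab(2) t by (intro add_mono mult_left_mono divide_right_mono) auto
  finally show ?thesis
    by simp
qed

lemma energy_convergent: "\<exists>L. (energy \<longlongrightarrow> L) at_top"
proof (rule Cauchy_at_top_imp_convergent)
  fix e :: real assume e: "e > 0"
  define t where "t = e / (4 * ((L2_norm q)\<^sup>2 + 1))"
  have t: "t > 0"
    unfolding t_def using e by (simp add: add_nonneg_pos)
  have t_small: "2 * t * (L2_norm q)\<^sup>2 < e / 2"
  proof -
    have "2 + 2 * (L2_norm q)\<^sup>2 \<noteq> 0" "4 + 4 * (L2_norm q)\<^sup>2 \<noteq> 0"
      using zero_le_power2[of "L2_norm q"] by linarith+
    then have "2 * t * (L2_norm q)\<^sup>2 = e / 2 * ((L2_norm q)\<^sup>2 / ((L2_norm q)\<^sup>2 + 1))"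
      unfolding t_def by (simp add: field_simps)
    also have "\<dots> < e / 2 * 1"
      using e by (intro mult_strict_left_mono) (auto simp: add_nonneg_pos)
    finally show ?thesis
      by simp
  qed
  have "\<forall>\<^sub>F r in at_top. L2_tail q r < e * t"
    using order_tendstoD(2)[OF tendsto_L2_tail[OF q_L2], of "e * t"] e t by simp
  then obtain r where r: "L2_tail q r < e * t"
    by (auto simp: eventually_at_top_linorder)
  show "\<exists>r. \<forall>R\<ge>r. \<forall>R'\<ge>r. dist (energy R) (energy R') < e"
  proof (intro exI allI impI)
    fix R R' assume "r \<le> R" "r \<le> R'"
    then have "\<bar>energy R - energy R'\<bar> \<le> L2_tail q r / (2 * t) + 2 * t * (L2_norm q)\<^sup>2"
      using t by (rule abs_energy_diff_le)
    moreover have "L2_tail q r / (2 * t) < e / 2"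
      using r t by (simp add: field_simps)
    ultimately show "dist (energy R) (energy R') < e"
      using t_small by (simp add: dist_real_def)
  qed
qed

lemma nn_integral_sq_trunc_shift_diff_le:
  assumes B: "(\<integral>\<^sup>+x. ennreal ((norm (q (x + y) - q x))\<^sup>2) \<partial>lborel) \<le> ennreal B" and B_nonneg: "0 \<le> B"
  shows "(\<integral>\<^sup>+x. ennreal ((norm (trunc R q (x + y) - trunc R q x))\<^sup>2) \<partial>lborel)
    \<le> ennreal (3 * (B + 2 * L2_tail q R))"
proof -
  define g where "g x = trunc R q x - q x" for x
  have [measurable]: "g \<in> borel_measurable borel"
    unfolding g_def by measurable
  have g_le: "(\<integral>\<^sup>+x. ennreal ((norm (g x))\<^sup>2) \<partial>lborel) \<le> ennreal (L2_tail q R)"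
    unfolding g_def nn_integral_L2_tail[OF q_L2, symmetric]
    by (intro nn_integral_mono ennreal_leI sq_norm_trunc_minus_le)
  have "trunc R q (x + y) - trunc R q x = (q (x + y) - q x) + g (x + y) + - g x" for x
    unfolding g_def by simp
  then have "(\<integral>\<^sup>+x. ennreal ((norm (trunc R q (x + y) - trunc R q x))\<^sup>2) \<partial>lborel)
      \<le> 3 * ((\<integral>\<^sup>+x. ennreal ((norm (q (x + y) - q x))\<^sup>2) \<partial>lborel)
        + (\<integral>\<^sup>+x. ennreal ((norm (g (x + y)))\<^sup>2) \<partial>lborel) + (\<integral>\<^sup>+x. ennreal ((norm (- g x))\<^sup>2) \<partial>lborel))"
    using nn_integral_sq_norm_add3_le[of "\<lambda>x. q (x + y) - q x" lborel "\<lambda>x. g (x + y)" "\<lambda>x. - g x"]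
    by simp
  also have "\<dots> \<le> 3 * ((\<integral>\<^sup>+x. ennreal ((norm (q (x + y) - q x))\<^sup>2) \<partial>lborel) + 2 * ennreal (L2_tail q R))"
    using g_le
    by (simp add: nn_integral_lborel_shift[where f = "\<lambda>x. ennreal ((norm (g x))\<^sup>2)"] mult_2 add.assoc
        add_mono mult_left_mono)
  also have "\<dots> \<le> 3 * (ennreal B + 2 * ennreal (L2_tail q R))"
    by (intro mult_left_mono add_mono B order_refl) simp
  also have "\<dots> = ennreal (3 * (B + 2 * L2_tail q R))"
    using B_nonneg L2_tail_nonneg by (simp add: ennreal_mult ennreal_plus)
  finally show ?thesis .
qed

lemma energy_le:
  assumes \<eta>: "\<eta> > 0" and \<delta>: "0 \<le> \<delta>"
    and w_le: "\<And>\<xi>. w \<xi> \<le> \<delta> + indicator {\<xi>. 2 / \<eta> \<le> \<bar>\<xi>\<bar>} \<xi>"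
    and B: "\<And>y. y \<in> {0..\<eta>} \<Longrightarrow> (\<integral>\<^sup>+x. ennreal ((norm (q (x + y) - q x))\<^sup>2) \<partial>lborel) \<le> ennreal B"
    and B_nonneg: "0 \<le> B"
  shows "energy R \<le> \<delta> * (L2_norm q)\<^sup>2 + 3 * (B + 2 * L2_tail q R)"
proof -
  define a where "a \<xi> = ennreal ((norm (fourier (trunc R q) \<xi>))\<^sup>2)" for \<xi>
  define H where "H = {\<xi>::real. 2 / \<eta> \<le> \<bar>\<xi>\<bar>}"
  have [measurable]: "a \<in> borel_measurable borel"
    unfolding a_def by measurable
  have "ennreal (energy R) = (\<integral>\<^sup>+\<xi>. ennreal (w \<xi> * (norm (fourier (trunc R q) \<xi>))\<^sup>2) \<partial>lborel)"
    unfolding energy_def using integrable_energy_integrand w_nonneg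
    by (intro nn_integral_eq_integral[symmetric]) auto
  also have "\<dots> \<le> (\<integral>\<^sup>+\<xi>. ennreal \<delta> * a \<xi> + indicator H \<xi> * a \<xi> \<partial>lborel)"
  proof (intro nn_integral_mono)
    fix \<xi>
    have "w \<xi> * (norm (fourier (trunc R q) \<xi>))\<^sup>2 \<le> (\<delta> + indicator H \<xi>) * (norm (fourier (trunc R q) \<xi>))\<^sup>2"
      using w_le[of \<xi>] unfolding H_def by (intro mult_right_mono) auto
    then show "ennreal (w \<xi> * (norm (fourier (trunc R q) \<xi>))\<^sup>2) \<le> ennreal \<delta> * a \<xi> + indicator H \<xi> * a \<xi>"
      unfolding a_def using \<delta>
      by (auto simp: ennreal_mult[symmetric] distrib_right ennreal_plus[symmetric] simp del: ennreal_plus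
          intro!: ennreal_leI split: split_indicator)
  qed
  also have "\<dots> = ennreal \<delta> * (\<integral>\<^sup>+\<xi>. a \<xi> \<partial>lborel) + (\<integral>\<^sup>+\<xi>. indicator H \<xi> * a \<xi> \<partial>lborel)"
    by (simp add: nn_integral_add nn_integral_cmult H_def)
  also have "\<dots> \<le> ennreal \<delta> * ennreal ((L2_norm q)\<^sup>2) + ennreal (3 * (B + 2 * L2_tail q R))"
  proof (intro add_mono mult_left_mono)
    show "(\<integral>\<^sup>+\<xi>. a \<xi> \<partial>lborel) \<le> ennreal ((L2_norm q)\<^sup>2)"
      unfolding a_def by (rule nn_integral_sq_fourier_trunc_le)
    have "(\<integral>\<^sup>+x. ennreal ((norm (trunc R q (x + y) - trunc R q x))\<^sup>2) \<partial>lborel) \<le> ennreal (3 * (B + 2 * L2_tail q R))"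
      if "y \<in> {0..\<eta>}" for y
      by (rule nn_integral_sq_trunc_shift_diff_le[OF B[OF that] B_nonneg])
    then show "(\<integral>\<^sup>+\<xi>. indicator H \<xi> * a \<xi> \<partial>lborel) \<le> ennreal (3 * (B + 2 * L2_tail q R))"
      unfolding a_def H_def by (intro nn_integral_high_freq_fourier_le integrable_trunc q_L2 \<eta>)
  qed simp
  also have "\<dots> = ennreal (\<delta> * (L2_norm q)\<^sup>2 + 3 * (B + 2 * L2_tail q R))"
    using \<delta> B_nonneg L2_tail_nonneg by (simp add: ennreal_mult ennreal_plus)
  finally show ?thesis
    using \<delta> B_nonneg L2_tail_nonneg by (subst (asm) ennreal_le_iff) auto
qed

lemma Lim_energy_le:
  assumes \<eta>: "\<eta> > 0" and \<delta>: "0 \<le> \<delta>"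
    and w_le: "\<And>\<xi>. w \<xi> \<le> \<delta> + indicator {\<xi>. 2 / \<eta> \<le> \<bar>\<xi>\<bar>} \<xi>"
    and B: "\<And>y. y \<in> {0..\<eta>} \<Longrightarrow> (\<integral>\<^sup>+x. ennreal ((norm (q (x + y) - q x))\<^sup>2) \<partial>lborel) \<le> ennreal B"
    and B_nonneg: "0 \<le> B"
  shows "Lim at_top energy \<le> \<delta> * (L2_norm q)\<^sup>2 + 3 * B"
proof -
  obtain L where L: "(energy \<longlongrightarrow> L) at_top"
    using energy_convergent by blast
  have "L \<le> \<delta> * (L2_norm q)\<^sup>2 + 3 * B"
  proof (rule tendsto_le[OF _ _ L])
    show "((\<lambda>R. \<delta> * (L2_norm q)\<^sup>2 + 3 * (B + 2 * L2_tail q R)) \<longlongrightarrow> \<delta> * (L2_norm q)\<^sup>2 + 3 * B) at_top"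
      using tendsto_L2_tail[OF q_L2] by (auto intro!: tendsto_eq_intros)
    show "\<forall>\<^sub>F R in at_top. energy R \<le> \<delta> * (L2_norm q)\<^sup>2 + 3 * (B + 2 * L2_tail q R)"
      by (intro always_eventually allI energy_le[OF \<eta> \<delta> w_le B B_nonneg])
  qed simp
  then show ?thesis
    using tendsto_Lim[OF _ L] by simp
qed

end

section \<open>The diagonal E-norm\<close>

lemma E_weight_diagonal:
  assumes "\<kappa> \<noteq> 0"
  shows "E_weight \<sigma> \<sigma> \<kappa> \<xi> = (\<xi>\<^sup>2 / (4 * \<kappa>\<^sup>2 + \<xi>\<^sup>2)) powr \<sigma>"
proof -
  have "\<bar>\<xi>\<bar> powr (2 * \<sigma>) = (\<xi>\<^sup>2) powr \<sigma>"
    by (simp add: powr_powr[symmetric])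
  then show ?thesis
    using assms unfolding E_weight_def by (simp add: powr_divide)
qed

lemma borel_measurable_E_weight [measurable]: "E_weight \<sigma> s \<kappa> \<in> borel_measurable borel"
  unfolding E_weight_def by measurable

lemma E_weight_nonneg: "0 \<le> E_weight \<sigma> s \<kappa> \<xi>"
  unfolding E_weight_def by simp

lemma E_weight_le_one:
  assumes "\<sigma> \<ge> 0" "\<kappa> \<noteq> 0"
  shows "E_weight \<sigma> \<sigma> \<kappa> \<xi> \<le> 1"
  using assms unfolding E_weight_diagonal[OF assms(2)]
  by (intro powr_le1) (auto simp: add_pos_nonneg)

lemma E_weight_le_low_high:
  assumes \<sigma>: "\<sigma> > 0" and \<kappa>: "\<kappa> \<noteq> 0" and \<eta>: "\<eta> > 0"
  shows "E_weight \<sigma> \<sigma> \<kappa> \<xi> \<le> ((1 / (\<eta> * \<kappa>))\<^sup>2) powr \<sigma> + indicator {\<xi>. 2 / \<eta> \<le> \<bar>\<xi>\<bar>} \<xi>"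
proof (cases "2 / \<eta> \<le> \<bar>\<xi>\<bar>")
  case True
  then show ?thesis
    using E_weight_le_one[of \<sigma> \<kappa> \<xi>] \<sigma> \<kappa> by (simp add: add_increasing)
next
  case False
  have "\<xi>\<^sup>2 / (4 * \<kappa>\<^sup>2 + \<xi>\<^sup>2) \<le> \<xi>\<^sup>2 / (4 * \<kappa>\<^sup>2)"
    using \<kappa> by (intro divide_left_mono) (auto simp: zero_less_mult_iff add_pos_nonneg)
  also have "\<dots> \<le> (2 / \<eta>)\<^sup>2 / (4 * \<kappa>\<^sup>2)"
  proof (intro divide_right_mono)
    have "\<bar>\<xi>\<bar>\<^sup>2 \<le> (2 / \<eta>)\<^sup>2"
      using False by (intro power_mono) auto
    then show "\<xi>\<^sup>2 \<le> (2 / \<eta>)\<^sup>2"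
      by simp
  qed simp
  also have "\<dots> = (1 / (\<eta> * \<kappa>))\<^sup>2"
    using \<eta> \<kappa> by (simp add: power2_eq_square field_simps)
  finally have "E_weight \<sigma> \<sigma> \<kappa> \<xi> \<le> ((1 / (\<eta> * \<kappa>))\<^sup>2) powr \<sigma>"
    unfolding E_weight_diagonal[OF \<kappa>] using \<sigma> by (intro powr_mono2) auto
  then show ?thesis
    using False by simp
qed

lemma E_norm_sq_le:
  assumes q: "q \<in> L2_space" and \<sigma>: "\<sigma> > 0" and \<kappa>: "\<kappa> \<noteq> 0" and \<eta>: "\<eta> > 0"
    and shift: "\<And>y. y \<in> {0..\<eta>} \<Longrightarrow> L2_norm (\<lambda>x. q (x + y) - q x) \<le> b" and C: "L2_norm q \<le> C"
  shows "E_norm_sq \<sigma> \<sigma> \<kappa> q \<le> ((1 / (\<eta> * \<kappa>))\<^sup>2) powr \<sigma> * C\<^sup>2 + 3 * b\<^sup>2"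
proof -
  interpret weighted_energy q "E_weight \<sigma> \<sigma> \<kappa>"
    using q \<sigma> \<kappa> by unfold_locales (auto intro: E_weight_nonneg E_weight_le_one)
  have "L2_norm (\<lambda>x. q (x + 0) - q x) \<le> b"
    using \<eta> by (intro shift) auto
  then have b: "0 \<le> b"
    using L2_norm_nonneg order_trans by blast
  have "(\<integral>\<^sup>+x. ennreal ((norm (q (x + y) - q x))\<^sup>2) \<partial>lborel) \<le> ennreal (b\<^sup>2)" if "y \<in> {0..\<eta>}" for y
    unfolding nn_integral_sq_norm_eq_L2_norm[OF L2_space_shift_diff[OF q]]
    using shift[OF that] L2_norm_nonneg by (intro ennreal_leI power_mono) auto
  then have "Lim at_top energy \<le> ((1 / (\<eta> * \<kappa>))\<^sup>2) powr \<sigma> * (L2_norm q)\<^sup>2 + 3 * b\<^sup>2"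
    by (rule Lim_energy_le[OF \<eta> powr_ge_zero E_weight_le_low_high[OF \<sigma> \<kappa> \<eta>] _ zero_le_power2])
  also have "\<dots> \<le> ((1 / (\<eta> * \<kappa>))\<^sup>2) powr \<sigma> * C\<^sup>2 + 3 * b\<^sup>2"
    using C L2_norm_nonneg by (intro add_mono order_refl mult_left_mono power_mono) auto
  finally show ?thesis
    unfolding E_norm_sq_def energy_def[abs_def] .
qed

lemma tendsto_powr_inverse_scaled_zero:
  fixes \<eta> \<sigma> :: real
  assumes "\<eta> > 0" "\<sigma> > 0"
  shows "((\<lambda>\<kappa>. ((1 / (\<eta> * \<kappa>))\<^sup>2) powr \<sigma>) \<longlongrightarrow> 0) at_top"
proof -
  have "filterlim (\<lambda>\<kappa>. \<eta> * \<kappa>) at_top at_top"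
    using assms(1) by (intro filterlim_tendsto_pos_mult_at_top[where c = \<eta>] tendsto_const filterlim_ident)
  then have "((\<lambda>\<kappa>. 1 / (\<eta> * \<kappa>)) \<longlongrightarrow> 0) at_top"
    by (intro tendsto_divide_0[OF tendsto_const] filterlim_at_top_imp_at_infinity)
  then have "((\<lambda>\<kappa>. (1 / (\<eta> * \<kappa>))\<^sup>2) \<longlongrightarrow> 0) at_top"
    using tendsto_power[of _ 0 at_top 2] by simp
  then show ?thesis
    by (rule tendsto_zero_powrI[OF _ tendsto_const]) (use assms in auto)
qed

theorem lemma2p1:
  fixes Q :: "(real \<Rightarrow> complex) set" and \<sigma> :: real
  assumes "Q \<subseteq> L2_space"
    and "\<exists>C. \<forall>q\<in>Q. L2_norm q \<le> C"
    and "L2_equicontinuous Q"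
    and "\<sigma> > 0"
  shows "((\<lambda>\<kappa>. SUP q\<in>Q. ennreal (E_norm \<sigma> \<sigma> \<kappa> q)) \<longlongrightarrow> 0) at_top"
proof (rule tendsto_SUP_ennreal_zeroI)
  fix e :: real assume e: "e > 0"
  obtain C where C: "\<And>q. q \<in> Q \<Longrightarrow> L2_norm q \<le> C"
    using assms(2) by blast
  obtain \<eta> where \<eta>: "\<eta> > 0"
    and shift: "\<And>q y. q \<in> Q \<Longrightarrow> y \<in> {0..\<eta>} \<Longrightarrow> L2_norm (\<lambda>x. q (x + y) - q x) \<le> e / 2"
    using L2_equicontinuousE[OF assms(3), of "e / 2"] e by auto
  have "\<forall>\<^sub>F \<kappa> in at_top. ((1 / (\<eta> * \<kappa>))\<^sup>2) powr \<sigma> * C\<^sup>2 < e\<^sup>2 / 4"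
    using e by (intro order_tendstoD(2)[OF tendsto_mult_left_zero[OF tendsto_powr_inverse_scaled_zero[OF \<eta> assms(4)]]])
       simp
  then show "\<forall>\<^sub>F \<kappa> in at_top. \<forall>q\<in>Q. E_norm \<sigma> \<sigma> \<kappa> q \<le> e"
    using eventually_gt_at_top[of 0]
  proof eventually_elim
    case (elim \<kappa>)
    have "E_norm_sq \<sigma> \<sigma> \<kappa> q \<le> e\<^sup>2" if "q \<in> Q" for q
      using E_norm_sq_le[OF subsetD[OF assms(1) that] assms(4) _ \<eta> shift[OF that] C[OF that], of \<kappa>] elim
      by (simp add: power_divide)
    then show ?case
      using e by (auto simp: E_norm_def intro: real_le_lsqrt)
  qed
qed

end
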